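(* Let $\tau:\mathscr{A}\to\mathbb{C}$ be a linear functional with $|\tau(q)|\le C_0^{\deg q}$ for every monomial $q$, and let $A>1$ with $C_0/A<1/2$. For $g_1,\dots,g_m\in\mathscr{A}_0$ set $$Q_m(g_1,\dots,g_m)=(1\otimes\tau+\tau\otimes1)\Big\{\sum_{i=1}^n\big[(\mathscr{J}\mathscr{D}g_1)\cdots(\mathscr{J}\mathscr{D}g_m)\big]_{ii}\Big\}.$$ Then $$\|Q_m(\Sigma g_1,\dots,\Sigma g_m)\|_A\le2(2A^{-2})^m\prod_{k=1}^m\|g_k\|_A.$$ In particular $(g_1,\dots,g_m)\mapsto Q_m(\Sigma g_1,\dots,\Sigma g_m)$ extends to a bounded multilinear map on $\mathscr{A}_0^{(A)}$ with values in $\mathscr{A}^{(A)}$.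
   Context: $\mathscr{A}=\mathbb{C}\langle X_1,\dots,X_n\rangle$, $\mathscr{A}_0$ the span of monomials of degree $\ge1$. For $P=\sum_q\lambda_q(P)q$, $\|P\|_A=\sum_q|\lambda_q(P)|A^{\deg q}$; $\mathscr{A}^{(A)}$, $\mathscr{A}_0^{(A)}$ the completions. $\Sigma:\mathscr{A}_0\to\mathscr{A}_0$ is defined on monomials by $\Sigma q=q/\deg q$ (the inverse of the operator $\mathscr{N}$ multiplying degree-$k$ monomials by $k$). $\partial_j$: derivation $\mathscr{A}\to\mathscr{A}\otimes\mathscr{A}^{op}$ with $\partial_jX_i=\delta_{ij}1\otimes1$; $\mathscr{D}_jq=\sum_{q=BX_jC}CB$; $\mathscr{J}\mathscr{D}g=(\partial_j\mathscr{D}_ig)_{i,j}\in M_n(\mathscr{A}\otimes\mathscr{A}^{op})$; matrix products use $(a\otimes b)(c\otimes d)=ac\otimes db$. $(1\otimes\tau+\tau\otimes1)(a\otimes b)=a\tau(b)+\tau(a)b$. *)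

theory Defs
  imports Complex_Main
begin

text \<open>Noncommutative polynomials in X_0,...,X_(n-1) are coefficient functions on words
(nat lists, letter i standing for X_i) with finite support; elements of A tensor A^op
are coefficient functions on pairs of words (u,v) standing for u tensor v.\<close>

type_synonym ncp = "nat list \<Rightarrow> complex"
type_synonym tens = "nat list \<times> nat list \<Rightarrow> complex"

definition supp :: "('a \<Rightarrow> complex) \<Rightarrow> 'a set" where
  "supp f = {x. f x \<noteq> 0}"

definition ncpoly :: "nat \<Rightarrow> ncp \<Rightarrow> bool" where
  "ncpoly n P \<longleftrightarrow> finite (supp P) \<and> (\<forall>q\<in>supp P. set q \<subseteq> {..<n})"

definition ncpoly0 :: "nat \<Rightarrow> ncp \<Rightarrow> bool" where
  "ncpoly0 n P \<longleftrightarrow> ncpoly n P \<and> P [] = 0"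

definition normA :: "real \<Rightarrow> ncp \<Rightarrow> real" where
  "normA A P = (\<Sum>q\<in>supp P. cmod (P q) * A ^ length q)"

definition Sig :: "ncp \<Rightarrow> ncp" where
  "Sig P = (\<lambda>q. if q = [] then 0 else P q / of_nat (length q))"

text \<open>Cyclic derivative: D_j q = sum over q = B X_j C of C B.\<close>
definition cycder :: "nat \<Rightarrow> ncp \<Rightarrow> ncp" where
  "cycder j P w = (\<Sum>q\<in>supp P. P q *
     of_nat (card {k. k < length q \<and> q ! k = j \<and> drop (Suc k) q @ take k q = w}))"

text \<open>Free difference quotient: partial_j q = sum over q = B X_j C of B tensor C.\<close>
definition pder :: "nat \<Rightarrow> ncp \<Rightarrow> tens" where
  "pder j P = (\<lambda>(u,v). \<Sum>q\<in>supp P. P q *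
     of_nat (card {k. k < length q \<and> q ! k = j \<and> take k q = u \<and> drop (Suc k) q = v}))"

text \<open>Product in A tensor A^op: (a tensor b)(c tensor d) = ac tensor db.\<close>
definition tmul :: "tens \<Rightarrow> tens \<Rightarrow> tens" where
  "tmul S T = (\<lambda>(u,v). \<Sum>x\<in>supp S. \<Sum>y\<in>supp T.
      if fst x @ fst y = u \<and> snd y @ snd x = v then S x * T y else 0)"

definition JD :: "ncp \<Rightarrow> nat \<Rightarrow> nat \<Rightarrow> tens" where
  "JD g i j = pder j (cycder i g)"

definition mmul :: "nat \<Rightarrow> (nat \<Rightarrow> nat \<Rightarrow> tens) \<Rightarrow> (nat \<Rightarrow> nat \<Rightarrow> tens) \<Rightarrow> nat \<Rightarrow> nat \<Rightarrow> tens" where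
  "mmul n M N i k = (\<lambda>uv. \<Sum>l<n. tmul (M i l) (N l k) uv)"

definition mone :: "nat \<Rightarrow> nat \<Rightarrow> tens" where
  "mone i k = (\<lambda>uv. if i = k \<and> uv = ([],[]) then 1 else 0)"

text \<open>(1 tensor tau + tau tensor 1)(a tensor b) = a tau(b) + tau(a) b, where the linear
functional tau is given by its values on monomials.\<close>
definition tauapp :: "ncp \<Rightarrow> tens \<Rightarrow> ncp" where
  "tauapp tau T w = (\<Sum>x\<in>supp T. T x *
     ((if fst x = w then tau (snd x) else 0) + (if snd x = w then tau (fst x) else 0)))"

definition Qm :: "nat \<Rightarrow> ncp \<Rightarrow> ncp list \<Rightarrow> ncp" where
  "Qm n tau gs = tauapp tau
     (\<lambda>uv. \<Sum>i<n. foldr (\<lambda>g M. mmul n (JD g) M) gs mone i i uv)"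

end

theory Submission
  imports Defs
begin

(* Weight an element T of A (x) A^op by the bi-graded norm
     tnorm_{a,b}(T) = sum_{(u,v)} |T(u,v)| a^|u| b^|v|,
   and call sum_{i,j} tnorm_{a,b}(M_ij) the mass of a matrix M over A (x) A^op.
   (1) tnorm_{a,b} is submultiplicative for the product of A (x) A^op and subadditive, so
       maximal row sums of matrices are submultiplicative, and the diagonal of a product
       M_1 ... M_m has total tnorm at most the product of the masses of the M_k.
   (2) A word q of length l contributes l rotations to the cyclic derivatives and then l - 1
       splittings to the free derivatives; Sigma cancels the factor l, so the mass of
       JD(Sigma g) is at most sum_q |g q| sum_{m <= l-2} a^m b^(l-2-m).  For {a,b} = {A,C0}
       with C0 < A/2 the inner geometric sum is at most 2 A^(l-2).
   (3) Since |tau(q)| <= C0^|q|, ||(1 (x) tau + tau (x) 1) T||_A <= tnorm_{A,C0}(T) + tnorm_{C0,A}(T).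
   Together: ||Q_m||_A <= 2 prod_k (2/A^2) ||g_k||_A.
   The coefficient bookkeeping is done once, through "pushforwards": a function written
   as the sum of finitely many weights grouped by a key; products, derivatives and the
   trace map are all of this form, and the triangle inequality is proved for them once. *)

section \<open>Functions given as pushforwards of finitely many weights\<close>

definition pushforward :: "'i set \<Rightarrow> ('i \<Rightarrow> complex) \<Rightarrow> ('i \<Rightarrow> 'k) \<Rightarrow> ('k \<Rightarrow> complex) \<Rightarrow> bool" where
  "pushforward I c k f \<longleftrightarrow> finite I \<and> (\<forall>x. f x = (\<Sum>i\<in>{i\<in>I. k i = x}. c i))"

lemma pushforward_supp: "pushforward I c k f \<Longrightarrow> supp f \<subseteq> k ` I"
proof
  fix x assume r: "pushforward I c k f" and x: "x \<in> supp f"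
  then have "(\<Sum>i\<in>{i\<in>I. k i = x}. c i) \<noteq> 0" by (auto simp: pushforward_def supp_def)
  then obtain i where "i \<in> I" "k i = x" by (metis (mono_tags, lifting) empty_Collect_eq sum.empty)
  then show "x \<in> k ` I" by auto
qed

lemma pushforward_finite: "pushforward I c k f \<Longrightarrow> finite (supp f)"
  using pushforward_supp by (metis finite_imageI finite_subset pushforward_def)

lemma pushforward_linear:
  assumes r: "pushforward I c k f"
  shows "(\<Sum>q\<in>supp f. f q * F q) = (\<Sum>i\<in>I. c i * F (k i))"
proof -
  have fI: "finite I" using r by (simp add: pushforward_def)
  have "(\<Sum>q\<in>supp f. f q * F q) = (\<Sum>q\<in>k ` I. f q * F q)"
    by (rule sum.mono_neutral_left) (use fI pushforward_supp[OF r] in \<open>auto simp: supp_def\<close>)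
  also have "\<dots> = (\<Sum>q\<in>k ` I. \<Sum>i\<in>{i\<in>I. k i = q}. c i * F (k i))"
    using r by (intro sum.cong refl) (simp add: pushforward_def sum_distrib_right)
  also have "\<dots> = (\<Sum>i\<in>I. c i * F (k i))"
    by (rule sum.image_gen[OF fI, symmetric])
  finally show ?thesis .
qed

lemma pushforward_weighted_norm:
  assumes r: "pushforward I c k f" and w: "\<And>x. w x \<ge> (0::real)"
  shows "(\<Sum>x\<in>supp f. cmod (f x) * w x) \<le> (\<Sum>i\<in>I. cmod (c i) * w (k i))"
proof -
  have fI: "finite I" using r by (simp add: pushforward_def)
  have "(\<Sum>x\<in>supp f. cmod (f x) * w x) \<le> (\<Sum>x\<in>k ` I. cmod (f x) * w x)"
    by (rule sum_mono2) (use fI pushforward_supp[OF r] w in auto)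
  also have "\<dots> \<le> (\<Sum>x\<in>k ` I. \<Sum>i\<in>{i\<in>I. k i = x}. cmod (c i) * w (k i))"
  proof (rule sum_mono)
    fix x
    have "cmod (f x) * w x \<le> (\<Sum>i\<in>{i\<in>I. k i = x}. cmod (c i)) * w x"
      using r w by (auto simp: pushforward_def intro!: mult_right_mono norm_sum)
    then show "cmod (f x) * w x \<le> (\<Sum>i\<in>{i\<in>I. k i = x}. cmod (c i) * w (k i))"
      by (simp add: sum_distrib_right)
  qed
  also have "\<dots> = (\<Sum>i\<in>I. cmod (c i) * w (k i))"
    by (rule sum.image_gen[OF fI, symmetric])
  finally show ?thesis .
qed

lemma pushforward_self: "finite (supp f) \<Longrightarrow> pushforward (supp f) f id f"
proof -
  assume "finite (supp f)"
  moreover have "{i\<in>supp f. id i = x} = (if f x = 0 then {} else {x})" for x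
    by (auto simp: supp_def)
  ultimately show ?thesis by (auto simp: pushforward_def)
qed

text \<open>This is how counting coefficients such as those of the
  cyclic and free derivatives arise.\<close>
lemma pushforward_count:
  fixes L :: "'k \<Rightarrow> nat"
  assumes r: "pushforward I c k P"
  shows "pushforward (SIGMA i:I. {m. m < L (k i) \<and> C (k i) m}) (\<lambda>p. c (fst p)) (\<lambda>p. h (k (fst p)) (snd p))
          (\<lambda>x. \<Sum>q\<in>supp P. P q * of_nat (card {m. m < L q \<and> C q m \<and> h q m = x}))"
  unfolding pushforward_def
proof (intro conjI allI)
  have fI: "finite I" using r by (simp add: pushforward_def)
  then show "finite (SIGMA i:I. {m. m < L (k i) \<and> C (k i) m})" by auto
  fix x
  have "(\<Sum>q\<in>supp P. P q * of_nat (card {m. m < L q \<and> C q m \<and> h q m = x}))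
     = (\<Sum>i\<in>I. \<Sum>m\<in>{m. m < L (k i) \<and> C (k i) m \<and> h (k i) m = x}. c i)"
    by (simp add: pushforward_linear[OF r] mult.commute)
  also have "\<dots> = (\<Sum>p\<in>(SIGMA i:I. {m. m < L (k i) \<and> C (k i) m \<and> h (k i) m = x}). c (fst p))"
    using sum.Sigma[OF fI, of "\<lambda>i. {m. m < L (k i) \<and> C (k i) m \<and> h (k i) m = x}" "\<lambda>i m. c i"]
    by (simp add: split_beta)
  also have "(SIGMA i:I. {m. m < L (k i) \<and> C (k i) m \<and> h (k i) m = x})
     = {p\<in>(SIGMA i:I. {m. m < L (k i) \<and> C (k i) m}). h (k (fst p)) (snd p) = x}"
    by auto
  finally show "(\<Sum>q\<in>supp P. P q * of_nat (card {m. m < L q \<and> C q m \<and> h q m = x})) =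
     (\<Sum>p\<in>{p\<in>(SIGMA i:I. {m. m < L (k i) \<and> C (k i) m}). h (k (fst p)) (snd p) = x}. c (fst p))" .
qed


section \<open>The bi-graded norm on A (x) A^op\<close>

definition tens_poly :: "nat \<Rightarrow> tens \<Rightarrow> bool" where
  "tens_poly n T \<longleftrightarrow> finite (supp T) \<and>
     (\<forall>x\<in>supp T. set (fst x) \<subseteq> {..<n} \<and> set (snd x) \<subseteq> {..<n})"

definition tnorm :: "real \<Rightarrow> real \<Rightarrow> tens \<Rightarrow> real" where
  "tnorm a b T = (\<Sum>x\<in>supp T. cmod (T x) * (a ^ length (fst x) * b ^ length (snd x)))"

lemma tnorm_nonneg: "a \<ge> 0 \<Longrightarrow> b \<ge> 0 \<Longrightarrow> tnorm a b T \<ge> 0"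
  unfolding tnorm_def by (intro sum_nonneg) auto

lemma pushforward_tens_poly:
  assumes "pushforward I c k T"
    and "\<And>i. i \<in> I \<Longrightarrow> set (fst (k i)) \<subseteq> {..<n} \<and> set (snd (k i)) \<subseteq> {..<n}"
  shows "tens_poly n T"
  using assms pushforward_finite pushforward_supp unfolding tens_poly_def by blast

lemma pushforward_tmul:
  assumes "finite (supp S)" "finite (supp T)"
  shows "pushforward (supp S \<times> supp T) (\<lambda>(x,y). S x * T y)
           (\<lambda>(x,y). (fst x @ fst y, snd y @ snd x)) (tmul S T)"
  unfolding pushforward_def
proof (intro conjI allI)
  show "finite (supp S \<times> supp T)" using assms by simp
  fix uv :: "nat list \<times> nat list"
  obtain u v where uv: "uv = (u,v)" by force
  let ?k = "\<lambda>(x,y). (fst x @ fst y, snd y @ snd x)" and ?c = "\<lambda>(x,y). S x * T y"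
  have "(\<Sum>i\<in>{i\<in>supp S \<times> supp T. ?k i = uv}. ?c i)
     = (\<Sum>i\<in>supp S \<times> supp T. if ?k i = uv then ?c i else 0)"
    by (rule sum.inter_filter) (use assms in simp)
  also have "\<dots> = tmul S T uv"
    by (simp add: tmul_def uv sum.cartesian_product case_prod_beta cong: if_cong)
  finally show "tmul S T uv = (\<Sum>i\<in>{i\<in>supp S \<times> supp T. ?k i = uv}. ?c i)" by simp
qed

text \<open>Submultiplicativity of the bi-graded norm (the product reverses the right factors,
  which is why both legs keep their own weight).\<close>
lemma tnorm_tmul:
  assumes "finite (supp S)" "finite (supp T)" "a \<ge> 0" "b \<ge> 0"
  shows "tnorm a b (tmul S T) \<le> tnorm a b S * tnorm a b T"
proof -
  let ?w = "\<lambda>x. a ^ length (fst x) * b ^ length (snd x)"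
  have "tnorm a b (tmul S T) \<le> (\<Sum>(x,y)\<in>supp S \<times> supp T.
          cmod (S x * T y) * ?w (fst x @ fst y, snd y @ snd x))"
    unfolding tnorm_def
    using pushforward_weighted_norm[OF pushforward_tmul[OF assms(1,2)], where w="\<lambda>x. a ^ length (fst x) * b ^ length (snd x)"] assms
    by (simp add: split_beta)
  also have "\<dots> = (\<Sum>(x,y)\<in>supp S \<times> supp T. (cmod (S x) * ?w x) * (cmod (T y) * ?w y))"
    by (intro sum.cong refl) (auto simp: norm_mult power_add algebra_simps)
  also have "\<dots> = tnorm a b S * tnorm a b T"
    by (simp add: tnorm_def sum_product sum.cartesian_product)
  finally show ?thesis .
qed

lemma tens_poly_tmul: "tens_poly n S \<Longrightarrow> tens_poly n T \<Longrightarrow> tens_poly n (tmul S T)"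
  by (rule pushforward_tens_poly[OF pushforward_tmul]) (auto simp: tens_poly_def dest!: bspec)

lemma pushforward_sum:
  assumes "finite L" "\<And>l. l \<in> L \<Longrightarrow> finite (supp (f l))"
  shows "pushforward (SIGMA l:L. supp (f l)) (\<lambda>(l,x). f l x) snd (\<lambda>x. \<Sum>l\<in>L. f l x)"
  unfolding pushforward_def
proof (intro conjI allI)
  show "finite (SIGMA l:L. supp (f l))" using assms by auto
  fix x
  have "(\<Sum>i\<in>{i\<in>(SIGMA l:L. supp (f l)). snd i = x}. (\<lambda>(l,x). f l x) i)
      = (\<Sum>i\<in>(SIGMA l:L. supp (f l)). if snd i = x then (\<lambda>(l,x). f l x) i else 0)"
    by (rule sum.inter_filter) (use assms in auto)
  also have "\<dots> = (\<Sum>l\<in>L. \<Sum>y\<in>supp (f l). if y = x then f l y else 0)"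
    using assms by (subst sum.Sigma) (auto simp: split_beta cong: if_cong)
  also have "\<dots> = (\<Sum>l\<in>L. f l x)"
    by (intro sum.cong refl) (use assms in \<open>auto simp: sum.delta supp_def\<close>)
  finally show "(\<Sum>l\<in>L. f l x) = (\<Sum>i\<in>{i\<in>(SIGMA l:L. supp (f l)). snd i = x}. (\<lambda>(l,x). f l x) i)"
    by simp
qed

lemma tnorm_sum:
  assumes "finite L" "\<And>l. l \<in> L \<Longrightarrow> finite (supp (f l))" "a \<ge> 0" "b \<ge> 0"
  shows "tnorm a b (\<lambda>x. \<Sum>l\<in>L. f l x) \<le> (\<Sum>l\<in>L. tnorm a b (f l))"
proof -
  let ?w = "\<lambda>x. a ^ length (fst x) * b ^ length (snd x)"
  have "tnorm a b (\<lambda>x. \<Sum>l\<in>L. f l x) \<le> (\<Sum>(l,x)\<in>(SIGMA l:L. supp (f l)). cmod (f l x) * ?w x)"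
    unfolding tnorm_def using pushforward_weighted_norm[OF pushforward_sum[OF assms(1,2)], where w="\<lambda>x. a ^ length (fst x) * b ^ length (snd x)"] assms
    by (simp add: split_beta)
  also have "\<dots> = (\<Sum>l\<in>L. tnorm a b (f l))"
    unfolding tnorm_def by (rule sum.Sigma[symmetric]) (use assms in auto)
  finally show ?thesis .
qed

lemma tens_poly_sum:
  assumes "finite L" "\<And>l. l \<in> L \<Longrightarrow> tens_poly n (f l)"
  shows "tens_poly n (\<lambda>x. \<Sum>l\<in>L. f l x)"
  by (rule pushforward_tens_poly[OF pushforward_sum]) (use assms in \<open>fastforce simp: tens_poly_def\<close>)+


section \<open>Matrices over A (x) A^op\<close>

lemma mmul_eq: "mmul n M N i k = (\<lambda>uv. \<Sum>l\<in>{..<n}. tmul (M i l) (N l k) uv)"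
  by (simp add: mmul_def)

lemma tens_poly_mmul:
  "\<forall>i j. tens_poly n (M i j) \<Longrightarrow> \<forall>i j. tens_poly n (N i j) \<Longrightarrow> tens_poly n (mmul n M N i k)"
  unfolding mmul_eq by (rule tens_poly_sum) (simp_all add: tens_poly_tmul)

lemma tnorm_mmul:
  assumes "\<forall>i j. tens_poly n (M i j)" "\<forall>i j. tens_poly n (N i j)" "a \<ge> 0" "b \<ge> 0"
  shows "tnorm a b (mmul n M N i k) \<le> (\<Sum>l<n. tnorm a b (M i l) * tnorm a b (N l k))"
proof -
  have fin: "finite (supp (tmul (M i l) (N l k)))" for l
    using tens_poly_tmul assms(1,2) unfolding tens_poly_def by blast
  have "tnorm a b (mmul n M N i k) \<le> (\<Sum>l<n. tnorm a b (tmul (M i l) (N l k)))"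
    unfolding mmul_eq by (rule tnorm_sum) (use fin assms in auto)
  also have "\<dots> \<le> (\<Sum>l<n. tnorm a b (M i l) * tnorm a b (N l k))"
    using assms unfolding tens_poly_def by (intro sum_mono tnorm_tmul) blast+
  finally show ?thesis .
qed

lemma row_sum_mmul:
  assumes "\<forall>i j. tens_poly n (M i j)" "\<forall>i j. tens_poly n (N i j)" "a \<ge> 0" "b \<ge> 0"
    and R: "\<forall>i<n. (\<Sum>j<n. tnorm a b (M i j)) \<le> R"
    and S: "\<forall>i<n. (\<Sum>j<n. tnorm a b (N i j)) \<le> S" "S \<ge> 0"
    and i: "i < n"
  shows "(\<Sum>k<n. tnorm a b (mmul n M N i k)) \<le> R * S"
proof -
  have "(\<Sum>k<n. tnorm a b (mmul n M N i k)) \<le> (\<Sum>k<n. \<Sum>l<n. tnorm a b (M i l) * tnorm a b (N l k))"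
    by (intro sum_mono tnorm_mmul assms)
  also have "\<dots> = (\<Sum>l<n. tnorm a b (M i l) * (\<Sum>k<n. tnorm a b (N l k)))"
    by (subst sum.swap) (simp add: sum_distrib_left)
  also have "\<dots> \<le> (\<Sum>l<n. tnorm a b (M i l) * S)"
    by (intro sum_mono mult_left_mono) (use S tnorm_nonneg assms in auto)
  also have "\<dots> = (\<Sum>l<n. tnorm a b (M i l)) * S" by (simp add: sum_distrib_right)
  also have "\<dots> \<le> R * S" using R i S by (intro mult_right_mono) auto
  finally show ?thesis .
qed

lemma diagonal_mmul:
  assumes "\<forall>i j. tens_poly n (M i j)" "\<forall>i j. tens_poly n (N i j)" "a \<ge> 0" "b \<ge> 0"
    and E: "\<forall>l<n. \<forall>i<n. tnorm a b (N l i) \<le> E"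
  shows "(\<Sum>i<n. tnorm a b (mmul n M N i i)) \<le> (\<Sum>i<n. \<Sum>l<n. tnorm a b (M i l)) * E"
proof -
  have "(\<Sum>i<n. tnorm a b (mmul n M N i i)) \<le> (\<Sum>i<n. \<Sum>l<n. tnorm a b (M i l) * tnorm a b (N l i))"
    by (intro sum_mono tnorm_mmul assms)
  also have "\<dots> \<le> (\<Sum>i<n. \<Sum>l<n. tnorm a b (M i l) * E)"
    by (intro sum_mono mult_left_mono) (use E tnorm_nonneg assms in auto)
  also have "\<dots> = (\<Sum>i<n. \<Sum>l<n. tnorm a b (M i l)) * E" by (simp add: sum_distrib_right)
  finally show ?thesis .
qed

lemma supp_mone: "supp (mone i j) = (if i = j then {([],[])} else {})"
  by (auto simp: supp_def mone_def)

lemma tens_poly_mone: "tens_poly n (mone i j)"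
  by (simp add: tens_poly_def supp_mone)

lemma row_sum_mone: "i < n \<Longrightarrow> (\<Sum>j<n. tnorm a b (mone i j)) = 1"
proof -
  have "tnorm a b (mone i j) = (if i = j then 1 else 0)" for j
    unfolding tnorm_def supp_mone by (simp add: mone_def)
  then show "i < n \<Longrightarrow> ?thesis" by simp
qed

definition jd_product :: "nat \<Rightarrow> ncp list \<Rightarrow> nat \<Rightarrow> nat \<Rightarrow> tens" where
  "jd_product n hs = foldr (\<lambda>h M. mmul n (JD h) M) hs mone"

definition jd_trace :: "nat \<Rightarrow> ncp list \<Rightarrow> tens" where
  "jd_trace n hs = (\<lambda>uv. \<Sum>i<n. jd_product n hs i i uv)"

lemma jd_product_simps [simp]:
  "jd_product n [] = mone"
  "jd_product n (h # hs) = mmul n (JD h) (jd_product n hs)"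
  by (simp_all add: jd_product_def)

lemma Qm_eq: "Qm n tau hs = tauapp tau (jd_trace n hs)"
  by (simp add: Qm_def jd_trace_def jd_product_def)

lemma tens_poly_jd_product:
  assumes "\<And>h i j. h \<in> set hs \<Longrightarrow> tens_poly n (JD h i j)"
  shows "tens_poly n (jd_product n hs i j)"
  using assms
proof (induction hs arbitrary: i j)
  case Nil
  then show ?case by (simp add: tens_poly_mone)
next
  case (Cons h hs)
  then show ?case by (simp add: tens_poly_mmul)
qed

lemma tens_poly_jd_trace:
  "(\<And>h i j. h \<in> set hs \<Longrightarrow> tens_poly n (JD h i j)) \<Longrightarrow> tens_poly n (jd_trace n hs)"
  unfolding jd_trace_def by (rule tens_poly_sum) (auto intro: tens_poly_jd_product)

definition mass :: "nat \<Rightarrow> real \<Rightarrow> real \<Rightarrow> (nat \<Rightarrow> nat \<Rightarrow> tens) \<Rightarrow> real" where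
  "mass n a b M = (\<Sum>i<n. \<Sum>j<n. tnorm a b (M i j))"

lemma mass_nonneg: "a \<ge> 0 \<Longrightarrow> b \<ge> 0 \<Longrightarrow> mass n a b M \<ge> 0"
  unfolding mass_def by (intro sum_nonneg tnorm_nonneg)

lemma row_sum_le_mass:
  assumes "a \<ge> 0" "b \<ge> 0" "i < n"
  shows "(\<Sum>j<n. tnorm a b (M i j)) \<le> mass n a b M"
  unfolding mass_def using assms
  by (intro member_le_sum) (auto intro!: sum_nonneg tnorm_nonneg)

lemma row_sum_jd_product:
  assumes ab: "a \<ge> 0" "b \<ge> 0"
    and fin: "\<And>g i j. g \<in> set gs \<Longrightarrow> tens_poly n (JD (F g) i j)"
    and bound: "\<And>g. g \<in> set gs \<Longrightarrow> mass n a b (JD (F g)) \<le> B g"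
    and i: "i < n"
  shows "(\<Sum>j<n. tnorm a b (jd_product n (map F gs) i j)) \<le> prod_list (map B gs)"
  using fin bound i
proof (induction gs arbitrary: i)
  case Nil
  then show ?case by (simp add: row_sum_mone)
next
  case (Cons g gs)
  have B0: "0 \<le> B g'" if "g' \<in> set (g # gs)" for g'
    using order_trans[OF mass_nonneg[OF ab] Cons.prems(2)[OF that]] .
  have rows: "\<forall>i<n. (\<Sum>j<n. tnorm a b (JD (F g) i j)) \<le> B g"
    using row_sum_le_mass[OF ab, of _ n "JD (F g)"] Cons.prems(2)[of g] by fastforce
  have JDfin: "\<forall>i j. tens_poly n (JD (F g) i j)" using Cons.prems(1) by simp
  have Pfin: "\<forall>i j. tens_poly n (jd_product n (map F gs) i j)"
    using Cons.prems(1) by (auto intro!: tens_poly_jd_product)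
  have "\<forall>i<n. (\<Sum>j<n. tnorm a b (jd_product n (map F gs) i j)) \<le> prod_list (map B gs)"
    using Cons.IH Cons.prems(1,2) by simp
  moreover have "prod_list (map B gs) \<ge> 0" using B0 by (intro prod_list_nonneg) auto
  ultimately show ?case
    using row_sum_mmul[OF JDfin Pfin ab rows] Cons.prems(3) by simp
qed

lemma tnorm_jd_trace:
  assumes ab: "a \<ge> 0" "b \<ge> 0" and ne: "gs \<noteq> []"
    and fin: "\<And>g i j. g \<in> set gs \<Longrightarrow> tens_poly n (JD (F g) i j)"
    and bound: "\<And>g. g \<in> set gs \<Longrightarrow> mass n a b (JD (F g)) \<le> B g"
  shows "tnorm a b (jd_trace n (map F gs)) \<le> prod_list (map B gs)"
proof -
  obtain g gs' where gs: "gs = g # gs'" using ne by (cases gs) auto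
  let ?P = "jd_product n (map F gs')"
  have entries: "\<forall>l<n. \<forall>i<n. tnorm a b (?P l i) \<le> prod_list (map B gs')"
  proof (intro allI impI)
    fix l i assume li: "l < n" "i < n"
    then have "tnorm a b (?P l i) \<le> (\<Sum>j<n. tnorm a b (?P l j))"
      by (intro member_le_sum) (auto intro!: tnorm_nonneg ab)
    also have "\<dots> \<le> prod_list (map B gs')"
      using row_sum_jd_product[OF ab _ _ li(1), of gs' F B] fin bound gs by auto
    finally show "tnorm a b (?P l i) \<le> prod_list (map B gs')" .
  qed
  have "0 \<le> B g'" if "g' \<in> set gs" for g'
    using order_trans[OF mass_nonneg[OF ab] bound[OF that]] .
  then have B0: "prod_list (map B gs') \<ge> 0" using gs by (intro prod_list_nonneg) auto
  have JDfin: "\<forall>i j. tens_poly n (JD (F g) i j)" using fin gs by simp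
  have Pfin: "\<forall>i j. tens_poly n (?P i j)"
    using fin gs by (auto intro!: tens_poly_jd_product)
  have diag_fin: "finite (supp (jd_product n (map F gs) i i))" for i
    using tens_poly_mmul[OF JDfin Pfin] by (simp add: gs tens_poly_def)
  have "tnorm a b (jd_trace n (map F gs)) \<le> (\<Sum>i<n. tnorm a b (jd_product n (map F gs) i i))"
    unfolding jd_trace_def by (rule tnorm_sum) (use diag_fin ab in auto)
  also have "\<dots> \<le> mass n a b (JD (F g)) * prod_list (map B gs')"
    using diagonal_mmul[OF JDfin Pfin ab entries] by (simp add: gs mass_def)
  also have "\<dots> \<le> B g * prod_list (map B gs')"
    using bound[of g] gs B0 by (intro mult_right_mono) auto
  finally show ?thesis by (simp add: gs)
qed


section \<open>The Jacobian of the cyclic gradient\<close>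

text \<open>The rotation of a word q = B X_j C at position m = |B|, giving C B.\<close>
definition rot :: "nat list \<Rightarrow> nat \<Rightarrow> nat list" where
  "rot q m = drop (Suc m) q @ take m q"

lemma length_rot: "m < length q \<Longrightarrow> length (rot q m) = length q - 1"
  by (simp add: rot_def)

lemma set_rot: "set (rot q m) \<subseteq> set q"
  by (auto simp: rot_def dest: in_set_dropD in_set_takeD)

text \<open>The coefficients of (JD P)_{ij} come from pairs (position m of the letter i in q,
  position m2 of the letter j in the rotation rot q m); the key is the splitting of the
  rotation at m2.\<close>
lemma pushforward_JD:
  assumes "finite (supp P)"
  shows "pushforward
     (SIGMA p:(SIGMA q:supp P. {m. m < length q \<and> q ! m = i}).
        {m2. m2 < length (rot (fst p) (snd p)) \<and> rot (fst p) (snd p) ! m2 = j})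
     (\<lambda>p. P (fst (fst p)))
     (\<lambda>p. (take (snd p) (rot (fst (fst p)) (snd (fst p))),
           drop (Suc (snd p)) (rot (fst (fst p)) (snd (fst p)))))
     (JD P i j)"
proof -
  have cyc: "pushforward (SIGMA q:supp P. {m. m < length q \<and> q ! m = i}) (\<lambda>p. P (fst p))
              (\<lambda>p. rot (fst p) (snd p)) (cycder i P)"
    using pushforward_count[OF pushforward_self[OF assms], of length "\<lambda>q m. q ! m = i"
        "\<lambda>q m. drop (Suc m) q @ take m q"]
    by (simp add: cycder_def[abs_def] rot_def)
  have "pder j (cycder i P) = (\<lambda>x. \<Sum>q\<in>supp (cycder i P). cycder i P q *
          of_nat (card {m. m < length q \<and> q ! m = j \<and> (take m q, drop (Suc m) q) = x}))"
    by (rule ext) (auto simp: pder_def split: prod.splits)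
  then show ?thesis
    using pushforward_count[OF cyc, of length "\<lambda>q m. q ! m = j" "\<lambda>q m. (take m q, drop (Suc m) q)"]
    by (simp add: JD_def)
qed

lemma tens_poly_JD:
  assumes "ncpoly n P"
  shows "tens_poly n (JD P i j)"
proof (rule pushforward_tens_poly[OF pushforward_JD])
  show "finite (supp P)" using assms by (simp add: ncpoly_def)
  fix p assume "p \<in> (SIGMA p:(SIGMA q:supp P. {m. m < length q \<and> q ! m = i}).
        {m2. m2 < length (rot (fst p) (snd p)) \<and> rot (fst p) (snd p) ! m2 = j})"
  then have "set (rot (fst (fst p)) (snd (fst p))) \<subseteq> {..<n}"
    using assms set_rot by (fastforce simp: ncpoly_def)
  then show "set (fst (take (snd p) (rot (fst (fst p)) (snd (fst p))),
           drop (Suc (snd p)) (rot (fst (fst p)) (snd (fst p))))) \<subseteq> {..<n} \<and>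
        set (snd (take (snd p) (rot (fst (fst p)) (snd (fst p))),
           drop (Suc (snd p)) (rot (fst (fst p)) (snd (fst p))))) \<subseteq> {..<n}"
    by (auto dest: in_set_dropD in_set_takeD)
qed

lemma sum_Sigma_filter:
  fixes L :: "'a \<Rightarrow> nat"
  assumes "finite A"
  shows "(\<Sum>p\<in>(SIGMA x:A. {y. y < L x \<and> P x y}). f p) = (\<Sum>x\<in>A. \<Sum>y<L x. if P x y then f (x,y) else 0)"
proof -
  have "(\<Sum>p\<in>(SIGMA x:A. {y. y < L x \<and> P x y}). f p) = (\<Sum>x\<in>A. \<Sum>y\<in>{y\<in>{..<L x}. P x y}. f (x,y))"
    using assms by (subst sum.Sigma) (auto simp: split_beta)
  also have "\<dots> = (\<Sum>x\<in>A. \<Sum>y<L x. if P x y then f (x,y) else 0)"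
    by (intro sum.cong refl sum.inter_filter) simp
  finally show ?thesis .
qed

lemma tnorm_JD:
  assumes fin: "finite (supp P)" and ab: "a \<ge> 0" "b \<ge> 0"
  shows "tnorm a b (JD P i j) \<le> (\<Sum>q\<in>supp P. \<Sum>m<length q. if q ! m = i then
      (\<Sum>m2<length q - 1. if rot q m ! m2 = j
         then cmod (P q) * (a ^ m2 * b ^ (length q - Suc (Suc m2))) else 0) else 0)"
proof -
  let ?W = "\<lambda>q m2. cmod (P q) * (a ^ m2 * b ^ (length q - Suc (Suc m2)))"
  let ?I1 = "SIGMA q:supp P. {m. m < length q \<and> q ! m = i}"
  let ?I = "SIGMA p:?I1. {m2. m2 < length (rot (fst p) (snd p)) \<and> rot (fst p) (snd p) ! m2 = j}"
  have "tnorm a b (JD P i j) \<le> (\<Sum>p\<in>?I. cmod (P (fst (fst p))) *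
      (a ^ length (take (snd p) (rot (fst (fst p)) (snd (fst p)))) *
       b ^ length (drop (Suc (snd p)) (rot (fst (fst p)) (snd (fst p))))))"
    unfolding tnorm_def
    using pushforward_weighted_norm[OF pushforward_JD[OF fin],
        where w="\<lambda>x. a ^ length (fst x) * b ^ length (snd x)"] ab
    by simp
  also have "\<dots> = (\<Sum>p\<in>?I. ?W (fst (fst p)) (snd p))"
    by (intro sum.cong refl) (auto simp: length_rot)
  also have "\<dots> = (\<Sum>p\<in>?I1. \<Sum>m2<length (rot (fst p) (snd p)).
          if rot (fst p) (snd p) ! m2 = j then ?W (fst p) m2 else 0)"
    using fin by (subst sum_Sigma_filter) (auto cong: if_cong)
  also have "\<dots> = (\<Sum>q\<in>supp P. \<Sum>m<length q. if q ! m = i then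
      (\<Sum>m2<length (rot q m). if rot q m ! m2 = j then ?W q m2 else 0) else 0)"
    using fin by (subst sum_Sigma_filter) (auto cong: if_cong)
  also have "\<dots> = (\<Sum>q\<in>supp P. \<Sum>m<length q. if q ! m = i then
      (\<Sum>m2<length q - 1. if rot q m ! m2 = j then ?W q m2 else 0) else 0)"
    by (intro sum.cong refl) (simp add: length_rot)
  finally show ?thesis .
qed

lemma sum_swap_outer2:
  "(\<Sum>i\<in>A. \<Sum>j\<in>B. \<Sum>q\<in>C. \<Sum>m\<in>D q. f i j q m) = (\<Sum>q\<in>C. \<Sum>m\<in>D q. \<Sum>i\<in>A. \<Sum>j\<in>B. f i j q m)"
proof -
  have "(\<Sum>i\<in>A. \<Sum>j\<in>B. \<Sum>q\<in>C. \<Sum>m\<in>D q. f i j q m) = (\<Sum>i\<in>A. \<Sum>q\<in>C. \<Sum>m\<in>D q. \<Sum>j\<in>B. f i j q m)"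
    by (intro sum.cong refl) (simp add: sum.swap[of _ B] sum.swap[of _ B "D _"])
  also have "\<dots> = (\<Sum>q\<in>C. \<Sum>m\<in>D q. \<Sum>i\<in>A. \<Sum>j\<in>B. f i j q m)"
    by (simp add: sum.swap[of _ A] sum.swap[of _ A "D _"])
  finally show ?thesis .
qed

lemma sum_delta2:
  assumes "c < (n::nat)" "\<forall>m2<L. d m2 < n"
  shows "(\<Sum>i<n. \<Sum>j<n. if c = i then (\<Sum>m2<L. if d m2 = j then W m2 else 0) else 0) = (\<Sum>m2<L. (W m2::real))"
proof -
  have "(\<Sum>i<n. \<Sum>j<n. if c = i then (\<Sum>m2<L. if d m2 = j then W m2 else 0) else 0)
      = (\<Sum>i<n. if c = i then (\<Sum>j<n. \<Sum>m2<L. if d m2 = j then W m2 else 0) else 0)"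
    by (intro sum.cong refl) auto
  also have "\<dots> = (\<Sum>j<n. \<Sum>m2<L. if d m2 = j then W m2 else 0)"
    using assms(1) by (simp add: sum.delta)
  also have "\<dots> = (\<Sum>m2<L. \<Sum>j<n. if d m2 = j then W m2 else 0)" by (rule sum.swap)
  also have "\<dots> = (\<Sum>m2<L. W m2)"
    using assms(2) by (intro sum.cong refl) (simp add: sum.delta)
  finally show ?thesis .
qed

text \<open>The mass of JD P: every word q of length l occurs l times (once per position), and
  its l - 1 splittings carry the mixed weights a^m b^(l-2-m).\<close>
lemma mass_JD:
  assumes P: "ncpoly n P" and ab: "a \<ge> 0" "b \<ge> 0"
  shows "mass n a b (JD P) \<le> (\<Sum>q\<in>supp P. real (length q) * cmod (P q) *
           (\<Sum>m<length q - 1. a ^ m * b ^ (length q - Suc (Suc m))))"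
proof -
  have fin: "finite (supp P)" using P by (simp add: ncpoly_def)
  let ?W = "\<lambda>q m2. cmod (P q) * (a ^ m2 * b ^ (length q - Suc (Suc m2)))"
  have "mass n a b (JD P) \<le> (\<Sum>i<n. \<Sum>j<n. \<Sum>q\<in>supp P. \<Sum>m<length q. if q ! m = i then
      (\<Sum>m2<length q - 1. if rot q m ! m2 = j then ?W q m2 else 0) else 0)"
    unfolding mass_def by (intro sum_mono tnorm_JD fin ab)
  also have "\<dots> = (\<Sum>q\<in>supp P. \<Sum>m<length q. \<Sum>i<n. \<Sum>j<n. if q ! m = i then
      (\<Sum>m2<length q - 1. if rot q m ! m2 = j then ?W q m2 else 0) else 0)"
    by (rule sum_swap_outer2)
  also have "\<dots> = (\<Sum>q\<in>supp P. \<Sum>m<length q. \<Sum>m2<length q - 1. ?W q m2)"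
  proof (rule sum.cong[OF refl], rule sum.cong[OF refl])
    fix q m assume q: "q \<in> supp P" and m: "m \<in> {..<length q}"
    have letters: "set q \<subseteq> {..<n}" using P q by (simp add: ncpoly_def)
    have "\<forall>m2<length q - 1. rot q m ! m2 < n"
    proof (intro allI impI)
      fix m2 assume "m2 < length q - 1"
      then have "rot q m ! m2 \<in> set (rot q m)" using m by (simp add: length_rot)
      then show "rot q m ! m2 < n" using letters set_rot by blast
    qed
    then show "(\<Sum>i<n. \<Sum>j<n. if q ! m = i then
        (\<Sum>m2<length q - 1. if rot q m ! m2 = j then ?W q m2 else 0) else 0)
        = (\<Sum>m2<length q - 1. ?W q m2)"
      using letters nth_mem[of m q] m by (intro sum_delta2) force+
  qed
  also have "\<dots> = (\<Sum>q\<in>supp P. real (length q) * cmod (P q) *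
           (\<Sum>m<length q - 1. a ^ m * b ^ (length q - Suc (Suc m))))"
    by (simp add: sum_distrib_left mult.assoc)
  finally show ?thesis .
qed

section \<open>Mixed power sums\<close>

definition mixed_power_sum :: "real \<Rightarrow> real \<Rightarrow> nat \<Rightarrow> real" where
  "mixed_power_sum a b k = (\<Sum>m\<le>k. a ^ m * b ^ (k - m))"

lemma mixed_power_sum_commute: "mixed_power_sum a b k = mixed_power_sum b a k"
  unfolding mixed_power_sum_def atMost_atLeast0
  by (subst sum.atLeastAtMost_rev) (intro sum.cong refl; simp add: mult.commute)

lemma geometric_sum_le_two: "0 \<le> (r::real) \<Longrightarrow> r \<le> 1/2 \<Longrightarrow> (\<Sum>j<N. r ^ j) \<le> 2 - 2 * r ^ N"
proof (induction N)
  case 0 then show ?case by simp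
next
  case (Suc N)
  have "(2 * r) * r ^ N \<le> 1 * r ^ N" by (rule mult_right_mono) (use Suc.prems in auto)
  then show ?case using Suc by (simp add: algebra_simps)
qed

lemma mixed_power_sum_le:
  fixes A C0 :: real
  assumes A: "A > 0" and C: "C0 \<ge> 0" "C0 / A < 1/2"
  shows "mixed_power_sum C0 A k \<le> 2 * A ^ k"
proof -
  define r where "r = C0 / A"
  have r: "0 \<le> r" "r \<le> 1/2" using A C by (auto simp: r_def)
  have "mixed_power_sum C0 A k = (\<Sum>m<Suc k. A ^ k * r ^ m)"
    unfolding mixed_power_sum_def lessThan_Suc_atMost
  proof (rule sum.cong[OF refl])
    fix m assume "m \<in> {..k}"
    then have "A ^ k = A ^ m * A ^ (k - m)" by (simp flip: power_add)
    then show "C0 ^ m * A ^ (k - m) = A ^ k * r ^ m" using A by (simp add: r_def power_divide field_simps)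
  qed
  also have "\<dots> = A ^ k * (\<Sum>m<Suc k. r ^ m)" by (rule sum_distrib_left[symmetric])
  also have "\<dots> \<le> A ^ k * 2"
    using geometric_sum_le_two[OF r, of "Suc k"] r A by (intro mult_left_mono) (auto intro: order_trans)
  finally show ?thesis by simp
qed

lemma splitting_weight_le:
  fixes a b A :: real
  assumes A: "A > 0" and mixed: "\<And>k. mixed_power_sum a b k \<le> 2 * A ^ k"
  shows "(\<Sum>m<l - 1. a ^ m * b ^ (l - Suc (Suc m))) \<le> 2 / A\<^sup>2 * A ^ l"
proof (cases "l \<ge> 2")
  case False
  then have "l - 1 = 0" by simp
  then show ?thesis using A by simp
next
  case True
  then obtain k where l: "l = Suc (Suc k)" by (metis add_2_eq_Suc le_Suc_ex)
  have "(\<Sum>m<l - 1. a ^ m * b ^ (l - Suc (Suc m))) = mixed_power_sum a b k"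
    by (simp add: l mixed_power_sum_def lessThan_Suc_atMost)
  also have "\<dots> \<le> 2 * A ^ k" by (rule mixed)
  also have "\<dots> = 2 / A\<^sup>2 * A ^ l" using A by (simp add: l power2_eq_square)
  finally show ?thesis .
qed

lemma supp_Sig: "supp (Sig g) = supp g - {[]}"
  by (auto simp: supp_def Sig_def)

lemma ncpoly_Sig: "ncpoly n g \<Longrightarrow> ncpoly n (Sig g)"
  by (auto simp: ncpoly_def supp_Sig)

text \<open>Sigma exactly cancels the multiplicity l of each word of length l.\<close>
lemma mass_JD_Sig:
  fixes a b A :: real
  assumes g: "ncpoly n g" and ab: "a \<ge> 0" "b \<ge> 0" and A: "A > 0"
    and mixed: "\<And>k. mixed_power_sum a b k \<le> 2 * A ^ k"
  shows "mass n a b (JD (Sig g)) \<le> 2 / A\<^sup>2 * normA A g"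
proof -
  have "mass n a b (JD (Sig g)) \<le> (\<Sum>q\<in>supp (Sig g). real (length q) * cmod (Sig g q) *
           (\<Sum>m<length q - 1. a ^ m * b ^ (length q - Suc (Suc m))))"
    by (rule mass_JD[OF ncpoly_Sig[OF g] ab])
  also have "\<dots> \<le> (\<Sum>q\<in>supp (Sig g). cmod (g q) * (2 / A\<^sup>2 * A ^ length q))"
  proof (rule sum_mono)
    fix q assume "q \<in> supp (Sig g)"
    then have "q \<noteq> []" by (simp add: supp_Sig)
    then have "real (length q) * cmod (Sig g q) = cmod (g q)"
      by (simp add: Sig_def norm_divide)
    moreover have "cmod (g q) * (\<Sum>m<length q - 1. a ^ m * b ^ (length q - Suc (Suc m)))
        \<le> cmod (g q) * (2 / A\<^sup>2 * A ^ length q)"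
      by (rule mult_left_mono[OF splitting_weight_le[OF A mixed]]) simp
    ultimately show "real (length q) * cmod (Sig g q) * (\<Sum>m<length q - 1. a ^ m * b ^ (length q - Suc (Suc m)))
        \<le> cmod (g q) * (2 / A\<^sup>2 * A ^ length q)"
      by simp
  qed
  also have "\<dots> \<le> (\<Sum>q\<in>supp g. cmod (g q) * (2 / A\<^sup>2 * A ^ length q))"
    by (rule sum_mono2) (use g A in \<open>auto simp: ncpoly_def supp_Sig\<close>)
  also have "\<dots> = 2 / A\<^sup>2 * normA A g" by (simp add: normA_def sum_distrib_left ac_simps)
  finally show ?thesis .
qed

lemma tnorm_jd_trace_Sig:
  fixes a b A :: real
  assumes ne: "gs \<noteq> []" and gs: "\<forall>g\<in>set gs. ncpoly n g"
    and ab: "a \<ge> 0" "b \<ge> 0" and A: "A > 0"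
    and mixed: "\<And>k. mixed_power_sum a b k \<le> 2 * A ^ k"
  shows "tnorm a b (jd_trace n (map Sig gs)) \<le> (2 / A\<^sup>2) ^ length gs * prod_list (map (normA A) gs)"
proof -
  have "tnorm a b (jd_trace n (map Sig gs)) \<le> prod_list (map (\<lambda>g. 2 / A\<^sup>2 * normA A g) gs)"
  proof (rule tnorm_jd_trace[OF ab ne])
    show "tens_poly n (JD (Sig g) i j)" if "g \<in> set gs" for g i j
      using that gs by (blast intro: tens_poly_JD ncpoly_Sig)
    show "mass n a b (JD (Sig g)) \<le> 2 / A\<^sup>2 * normA A g" if "g \<in> set gs" for g
      using that gs by (blast intro: mass_JD_Sig[OF _ ab A mixed])
  qed
  also have "\<dots> = (2 / A\<^sup>2) ^ length gs * prod_list (map (normA A) gs)"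
    by (induction gs) auto
  finally show ?thesis .
qed

text \<open>Each tensor u (x) v produces the two terms tau(v) u and tau(u) v.\<close>
lemma pushforward_tauapp:
  assumes fT: "finite (supp T)"
  shows "pushforward (supp T \<times> (UNIV::bool set)) (\<lambda>(x,b). T x * (if b then tau (snd x) else tau (fst x)))
     (\<lambda>(x,b). if b then fst x else snd x) (tauapp tau T)"
  unfolding pushforward_def
proof (intro conjI allI)
  show "finite (supp T \<times> (UNIV::bool set))" using fT by simp
  fix w
  let ?k = "\<lambda>(x,b). if b then fst x else snd x"
    and ?c = "\<lambda>(x,b). T x * (if b then tau (snd x) else tau (fst x))"
  have "(\<Sum>p\<in>{p\<in>supp T \<times> (UNIV::bool set). ?k p = w}. ?c p)
      = (\<Sum>p\<in>supp T \<times> (UNIV::bool set). if ?k p = w then ?c p else 0)"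
    by (rule sum.inter_filter) (use fT in simp)
  also have "\<dots> = tauapp tau T w"
    unfolding tauapp_def sum.cartesian_product'
    by (intro sum.cong refl) (simp add: UNIV_bool algebra_simps)
  finally show "tauapp tau T w = (\<Sum>p\<in>{p\<in>supp T \<times> (UNIV::bool set). ?k p = w}. ?c p)" by simp
qed

lemma normA_tauapp:
  fixes A C0 :: real
  assumes T: "tens_poly n T" and tau: "\<forall>q. set q \<subseteq> {..<n} \<longrightarrow> cmod (tau q) \<le> C0 ^ length q"
    and A: "A \<ge> 0"
  shows "normA A (tauapp tau T) \<le> tnorm A C0 T + tnorm C0 A T"
proof -
  have fT: "finite (supp T)" using T by (simp add: tens_poly_def)
  have "normA A (tauapp tau T) \<le> (\<Sum>(x,b)\<in>supp T \<times> (UNIV::bool set).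
      cmod (T x * (if b then tau (snd x) else tau (fst x))) * A ^ length (if b then fst x else snd x))"
    unfolding normA_def
    using pushforward_weighted_norm[OF pushforward_tauapp[OF fT], where w="\<lambda>w. A ^ length w"] A
    by (simp add: split_beta)
  also have "\<dots> = (\<Sum>x\<in>supp T. cmod (T x) * (A ^ length (fst x) * cmod (tau (snd x)))
                      + cmod (T x) * (A ^ length (snd x) * cmod (tau (fst x))))"
    unfolding sum.cartesian_product'
    by (intro sum.cong refl) (simp add: UNIV_bool norm_mult algebra_simps)
  also have "\<dots> \<le> (\<Sum>x\<in>supp T. cmod (T x) * (A ^ length (fst x) * C0 ^ length (snd x))
                      + cmod (T x) * (A ^ length (snd x) * C0 ^ length (fst x)))"
  proof (intro sum_mono add_mono mult_left_mono)
    fix x assume "x \<in> supp T"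
    then have "set (fst x) \<subseteq> {..<n}" "set (snd x) \<subseteq> {..<n}" using T by (auto simp: tens_poly_def)
    then show "cmod (tau (snd x)) \<le> C0 ^ length (snd x)" "cmod (tau (fst x)) \<le> C0 ^ length (fst x)"
      using tau by blast+
  qed (use A in auto)
  also have "\<dots> = tnorm A C0 T + tnorm C0 A T" by (simp add: tnorm_def sum.distrib ac_simps)
  finally show ?thesis .
qed

lemma normA_nonneg: "A \<ge> 0 \<Longrightarrow> normA A g \<ge> 0"
  unfolding normA_def by (intro sum_nonneg) simp

text \<open>Without letters the trace is an empty sum, so Q_m vanishes.\<close>
lemma normA_Qm_no_letters: "normA A (Qm 0 tau hs) = 0"
proof -
  have "Qm 0 tau hs = (\<lambda>w. 0)"
    by (simp add: Qm_def tauapp_def[abs_def] supp_def)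
  then show ?thesis by (simp add: normA_def supp_def)
qed


theorem mainTheorem8:
  fixes n :: nat and tau :: "nat list \<Rightarrow> complex" and C0 A :: real
    and gs :: "(nat list \<Rightarrow> complex) list"
  assumes "\<forall>q. set q \<subseteq> {..<n} \<longrightarrow> cmod (tau q) \<le> C0 ^ length q"
    and "A > 1" and "C0 / A < 1/2"
    and "gs \<noteq> []" and "\<forall>g\<in>set gs. ncpoly0 n g"
  shows "normA A (Qm n tau (map Sig gs))
           \<le> 2 * (2 / A\<^sup>2) ^ length gs * prod_list (map (normA A) gs)"
proof (cases "n = 0")
  case True
  have "0 \<le> 2 * (2 / A\<^sup>2) ^ length gs * prod_list (map (normA A) gs)"
    using assms(2) normA_nonneg[of A] by (intro mult_nonneg_nonneg prod_list_nonneg) auto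
  then show ?thesis using True by (simp add: normA_Qm_no_letters)
next
  case False
  then have "cmod (tau [0]) \<le> C0" using assms(1)[rule_format, of "[0]"] by simp
  then have C0: "C0 \<ge> 0" by (rule order_trans[OF norm_ge_zero])
  have A: "A > 0" using assms(2) by simp
  have gs: "\<forall>g\<in>set gs. ncpoly n g" using assms(5) by (simp add: ncpoly0_def)
  have mixed_CA: "mixed_power_sum C0 A k \<le> 2 * A ^ k" for k
    by (rule mixed_power_sum_le[OF A C0 assms(3)])
  then have mixed_AC: "mixed_power_sum A C0 k \<le> 2 * A ^ k" for k
    by (simp add: mixed_power_sum_commute)
  let ?T = "jd_trace n (map Sig gs)" and ?R = "(2 / A\<^sup>2) ^ length gs * prod_list (map (normA A) gs)"
  have T: "tens_poly n ?T"
    using gs by (intro tens_poly_jd_trace) (auto intro: tens_poly_JD ncpoly_Sig)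
  have "normA A (Qm n tau (map Sig gs)) \<le> tnorm A C0 ?T + tnorm C0 A ?T"
    unfolding Qm_eq using normA_tauapp[OF T assms(1)] A by simp
  also have "\<dots> \<le> ?R + ?R"
    using A C0 by (intro add_mono tnorm_jd_trace_Sig[OF assms(4) gs] mixed_AC mixed_CA) auto
  finally show ?thesis by (simp add: ac_simps)
qed

end
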